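(* Let $x\in\mathfrak{g}=\mathfrak{gl}(n+1,\mathbb{C})$ be regular nilpotent and suppose $x\in\mathfrak{b}$ for a Borel subalgebra $\mathfrak{b}\in Q_{+,n+1}\cup Q_{-,n+1}$. Then $x_n$ is regular nilpotent in $\mathfrak{g}_n$ and $\mathfrak{z}_{\mathfrak{g}_n}(x_n)\cap\mathfrak{z}_{\mathfrak{g}}(x)=0$.
   Context: $n\ge1$. $\mathfrak{g}_n\cong\mathfrak{gl}(n,\mathbb{C})$ is embedded in $\mathfrak{g}$ as matrices supported in the upper left $n\times n$ corner, $x_n$ is the upper left $n\times n$ submatrix of $x$ (viewed in $\mathfrak{g}_n$), and $\mathfrak{z}$ denotes centralizers. $K_{n+1}=GL(n,\mathbb{C})\times GL(1,\mathbb{C})$ is the group of invertible block diagonal matrices with blocks of sizes $n$ and $1$, acting by conjugation on the flag variety $\mathcal{B}_{n+1}$ of $\mathfrak{g}$. $Q_{+,n+1}$ (resp. $Q_{-,n+1}$) is the $K_{n+1}$-orbit of the Borel subalgebra of upper (resp. lower) triangular matrices. *)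

theory Defs
  imports "HOL-Analysis.Analysis"
begin

text \<open>Conventions. gl(n+1,C) is modelled as complex^('n::{finite,linorder})^('n::{finite,linorder}) for a finite linearly
ordered index type 'n with CARD('n) = n+1 (n >= 1 means CARD('n) >= 2).
The order on 'n is the order of the standard basis; the last index
(Max UNIV) plays the role of index n+1, so g_n consists of the matrices
supported on the other indices (the upper left n x n corner).\<close>

definition last_idx :: "'n::{finite,linorder}" where
  "last_idx = Max (UNIV :: 'n set)"

text \<open>Complex dimension of a set of matrices: dimension of its span, matrices
being identified with vectors in complex^('n x 'n).\<close>
definition flat_mat :: "complex^('n::{finite,linorder})^('n::{finite,linorder}) \<Rightarrow> complex^('n \<times> 'n)" where
  "flat_mat A = (\<chi> p. A $ fst p $ snd p)"

definition cdim :: "(complex^('n::{finite,linorder})^('n::{finite,linorder})) set \<Rightarrow> nat" where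
  "cdim S = vec.dim (flat_mat ` S)"

definition centralizer :: "(complex^('n::{finite,linorder})^('n::{finite,linorder})) set \<Rightarrow> complex^('n::{finite,linorder})^('n::{finite,linorder}) \<Rightarrow> (complex^('n::{finite,linorder})^('n::{finite,linorder})) set" where
  "centralizer L a = {y \<in> L. y ** a = a ** y}"

definition mat_nilpotent :: "complex^('n::{finite,linorder})^('n::{finite,linorder}) \<Rightarrow> bool" where
  "mat_nilpotent A \<longleftrightarrow> (\<exists>k. (((**) A) ^^ k) (mat 1) = 0)"

definition gl_full :: "(complex^('n::{finite,linorder})^('n::{finite,linorder})) set" where
  "gl_full = UNIV"

definition gl_corner :: "(complex^('n::{finite,linorder})^('n::{finite,linorder})) set" where
  "gl_corner = {A. \<forall>i j. (i = last_idx \<or> j = last_idx) \<longrightarrow> A $ i $ j = 0}"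

definition corner :: "complex^('n::{finite,linorder})^('n::{finite,linorder}) \<Rightarrow> complex^('n::{finite,linorder})^('n::{finite,linorder})" where
  "corner x = (\<chi> i j. if i \<noteq> last_idx \<and> j \<noteq> last_idx then x $ i $ j else 0)"

text \<open>Regular: centralizer dimension equals the rank. rank gl(n+1) = n+1, rank gl(n) = n.\<close>
definition regular_nilpotent_g :: "complex^('n::{finite,linorder})^('n::{finite,linorder}) \<Rightarrow> bool" where
  "regular_nilpotent_g x \<longleftrightarrow> mat_nilpotent x \<and> cdim (centralizer gl_full x) = CARD('n)"

definition regular_nilpotent_gn :: "complex^('n::{finite,linorder})^('n::{finite,linorder}) \<Rightarrow> bool" where
  "regular_nilpotent_gn y \<longleftrightarrow> y \<in> gl_corner \<and> mat_nilpotent y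
      \<and> cdim (centralizer gl_corner y) = CARD('n) - 1"

text \<open>K_{n+1} = GL(n) x GL(1): invertible block diagonal matrices.\<close>
definition K_grp :: "(complex^('n::{finite,linorder})^('n::{finite,linorder})) set" where
  "K_grp = {k. invertible k \<and> (\<forall>i. i \<noteq> last_idx \<longrightarrow> k $ i $ last_idx = 0 \<and> k $ last_idx $ i = 0)}"

definition borel_upper :: "(complex^('n::{finite,linorder})^('n::{finite,linorder})) set" where
  "borel_upper = {u. \<forall>i j. j < i \<longrightarrow> u $ i $ j = 0}"

definition borel_lower :: "(complex^('n::{finite,linorder})^('n::{finite,linorder})) set" where
  "borel_lower = {u. \<forall>i j. i < j \<longrightarrow> u $ i $ j = 0}"

definition Q_plus :: "(complex^('n::{finite,linorder})^('n::{finite,linorder})) set set" where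
  "Q_plus = {(\<lambda>u. k ** u ** matrix_inv k) ` borel_upper | k. k \<in> K_grp}"

definition Q_minus :: "(complex^('n::{finite,linorder})^('n::{finite,linorder})) set set" where
  "Q_minus = {(\<lambda>u. k ** u ** matrix_inv k) ` borel_lower | k. k \<in> K_grp}"

end

theory Submission
  imports Defs
begin

text \<open>
  Conjugation by \<open>K\<close> commutes with taking the upper left corner, and transposition exchanges
  the two Borel subalgebras, so we may assume that \<open>x\<close> is upper triangular; being nilpotent, it is
  strictly upper triangular. The commutator with \<open>x\<close> maps the upper triangular matrices into the
  strictly upper triangular ones, so the centralizer of \<open>x\<close> has dimension at least \<open>n + 1\<close>, and
  one more for each vanishing superdiagonal entry of \<open>x\<close>; regularity therefore makes the whole
  superdiagonal of \<open>x\<close> nonzero. Then the last basis vector \<open>e\<close> is cyclic for \<open>x\<close>, and since the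
  kernel of any \<open>y\<close> commuting with \<open>x\<close> is \<open>x\<close>-invariant, such a \<open>y\<close> vanishes as soon as
  \<open>y e = 0\<close>. Every element of \<open>g\<^sub>n\<close> kills \<open>e\<close>, so already the centralizer of \<open>x\<close> in \<open>g\<^sub>n\<close> is
  zero. The corner \<open>x\<^sub>n\<close> again has a nonzero superdiagonal inside \<open>g\<^sub>n\<close>, so restriction to
  the last column of \<open>g\<^sub>n\<close> embeds its centralizer into \<open>\<complex>\<^sup>n\<close>, while the commutator count gives
  dimension at least \<open>n\<close>.
\<close>

subsection \<open>Flattening and dimension\<close>

type_synonym 'n cmat = "complex^'n^'n"

definition unflat_mat :: "complex^('n::finite \<times> 'n) \<Rightarrow> 'n cmat" where
  "unflat_mat v = (\<chi> i j. v $ (i, j))"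

text \<open>Scalar multiplication of complex matrices; \<open>(*s)\<close> only scales vectors of scalars.\<close>
definition scale_mat :: "complex \<Rightarrow> ('n::finite) cmat \<Rightarrow> 'n cmat" where
  "scale_mat c A = (\<chi> i j. c * A$i$j)"

lemma flat_mat_unflat_mat [simp]: "flat_mat (unflat_mat v) = v"
  by (simp add: flat_mat_def unflat_mat_def vec_eq_iff)

lemma unflat_mat_flat_mat [simp]: "unflat_mat (flat_mat A) = A"
  by (simp add: flat_mat_def unflat_mat_def vec_eq_iff)

lemma flat_mat_zero [simp]: "flat_mat 0 = 0"
  by (simp add: flat_mat_def vec_eq_iff)

lemma flat_mat_add: "flat_mat (A + B) = flat_mat A + flat_mat B"
  by (simp add: flat_mat_def vec_eq_iff)

lemma flat_mat_scale_mat: "flat_mat (scale_mat c A) = c *s flat_mat A"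
  by (simp add: flat_mat_def scale_mat_def vec_eq_iff)

lemma unflat_mat_add: "unflat_mat (v + w) = unflat_mat v + unflat_mat w"
  by (simp add: unflat_mat_def vec_eq_iff)

lemma unflat_mat_scale: "unflat_mat (c *s v) = scale_mat c (unflat_mat v)"
  by (simp add: unflat_mat_def scale_mat_def vec_eq_iff)

lemma matrix_add_rdistrib: "(A + B) ** C = A ** C + B ** (C::'a::semiring_1^'n::finite^'n)"
  by (vector matrix_matrix_mult_def sum.distrib[symmetric] field_simps)

lemma matrix_diff_ldistrib: "C ** (A - B) = C ** A - C ** (B::'a::ring_1^'n::finite^'n)"
  by (simp add: matrix_matrix_mult_def vec_eq_iff right_diff_distrib sum_subtractf)

lemma matrix_diff_rdistrib: "(A - B) ** C = A ** C - B ** (C::'a::ring_1^'n::finite^'n)"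
  by (simp add: matrix_matrix_mult_def vec_eq_iff left_diff_distrib sum_subtractf)

lemma matrix_mul_scale_mat: "A ** scale_mat c B = scale_mat c (A ** B)"
  by (simp add: scale_mat_def matrix_matrix_mult_def vec_eq_iff sum_distrib_left mult_ac)

lemma scale_mat_matrix_mul: "scale_mat c A ** B = scale_mat c (A ** B)"
  by (simp add: scale_mat_def matrix_matrix_mult_def vec_eq_iff sum_distrib_left mult_ac)

lemma scale_mat_diff: "scale_mat c A - scale_mat c B = scale_mat c (A - B)"
  by (simp add: scale_mat_def vec_eq_iff algebra_simps)

lemma linear_flattened:
  fixes g :: "('n::{finite,linorder}) cmat \<Rightarrow> 'n cmat"
  assumes "\<And>A B. g (A + B) = g A + g B" and "\<And>c A. g (scale_mat c A) = scale_mat c (g A)"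
  shows "Vector_Spaces.linear (*s) (*s) (\<lambda>v. flat_mat (g (unflat_mat v)))"
  using vec.vector_space_axioms unfolding Vector_Spaces.linear_iff
  by (simp add: unflat_mat_add unflat_mat_scale assms flat_mat_scale_mat flat_mat_add)

lemma cdim_linear_image:
  fixes g :: "('n::{finite,linorder}) cmat \<Rightarrow> 'n cmat"
  assumes "\<And>A B. g (A + B) = g A + g B" and "\<And>c A. g (scale_mat c A) = scale_mat c (g A)"
    and "inj g"
  shows "cdim (g ` S) = cdim S"
proof -
  let ?G = "\<lambda>v. flat_mat (g (unflat_mat v))"
  have "inj ?G"
  proof (rule injI)
    fix v w assume "?G v = ?G w"
    then have "unflat_mat v = unflat_mat w" using \<open>inj g\<close> by (metis injD unflat_mat_flat_mat)
    then show "v = w" by (metis flat_mat_unflat_mat)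
  qed
  moreover have "flat_mat ` g ` S = ?G ` flat_mat ` S"
    by (simp add: image_image)
  ultimately show ?thesis
    unfolding cdim_def using vec.dim_image_eq[OF linear_flattened[OF assms(1,2)]]
    by (metis inj_on_subset subset_UNIV)
qed

lemma vec_subspace_flat_mat_image:
  assumes "0 \<in> L" and "\<And>A B. A \<in> L \<Longrightarrow> B \<in> L \<Longrightarrow> A + B \<in> L"
    and "\<And>c A. A \<in> L \<Longrightarrow> scale_mat c A \<in> L"
  shows "vec.subspace (flat_mat ` L)"
  unfolding vec.subspace_def
proof (intro conjI ballI allI)
  show "0 \<in> flat_mat ` L" using assms(1) flat_mat_zero by (metis image_eqI)
  show "v + w \<in> flat_mat ` L" if "v \<in> flat_mat ` L" "w \<in> flat_mat ` L" for v w
    using that assms(2) by (auto simp: flat_mat_add[symmetric])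
  show "c *s v \<in> flat_mat ` L" if "v \<in> flat_mat ` L" for c v
    using that assms(3) by (auto simp: flat_mat_scale_mat[symmetric])
qed

lemma span_Int_span_Diff_eq_0:
  fixes C :: "('a::field^'m) set"
  assumes "vec.independent C" and "B \<subseteq> C"
    and "v \<in> vec.span B" and "v \<in> vec.span (C - B)"
  shows "v = 0"
proof -
  have "finite C" using assms(1) vec.finiteI_independent by blast
  have card_span: "vec.dim (vec.span D) = card D" if "D \<subseteq> C" for D
    using that assms(1) vec.independent_mono vec.dim_span_eq_card_independent by blast
  have "{x + y |x y. x \<in> vec.span B \<and> y \<in> vec.span (C - B)} = vec.span C"
    using vec.span_Un[of B "C - B"] assms(2) by (simp add: Un_absorb1)
  moreover have "vec.dim {x + y |x y. x \<in> vec.span B \<and> y \<in> vec.span (C - B)}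
      + vec.dim (vec.span B \<inter> vec.span (C - B)) = vec.dim (vec.span B) + vec.dim (vec.span (C - B))"
    by (rule vec.dim_sums_Int) auto
  ultimately have "card C + vec.dim (vec.span B \<inter> vec.span (C - B)) = card B + card (C - B)"
    using card_span[of C] card_span[of B] card_span[of "C - B"] assms(2) by simp
  moreover have "card C = card B + card (C - B)"
    using \<open>finite C\<close> assms(2) by (simp add: card_Diff_subset card_mono finite_subset)
  ultimately have "vec.span B \<inter> vec.span (C - B) \<subseteq> {0}" by simp
  then show ?thesis using assms(3,4) by blast
qed

lemma dim_le_dim_kernel_add_dim_image:
  fixes F :: "'a::field^'m \<Rightarrow> 'a^'k"
  assumes lin: "Vector_Spaces.linear (*s) (*s) F" and "vec.subspace S"
  shows "vec.dim S \<le> vec.dim (S \<inter> {v. F v = 0}) + vec.dim (F ` S)"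
proof -
  interpret F: Vector_Spaces.linear "(*s)" "(*s)" F by (rule lin)
  define K where "K = S \<inter> {v. F v = 0}"
  obtain B where B: "B \<subseteq> K" "vec.independent B" "K \<subseteq> vec.span B" "card B = vec.dim K"
    using vec.basis_exists[of K] by blast
  obtain C where C: "B \<subseteq> C" "C \<subseteq> S" "vec.independent C" "S \<subseteq> vec.span C"
    using vec.maximal_independent_subset_extend[of B S] B(1,2) K_def by blast
  have "finite C" using C(3) vec.finiteI_independent by blast
  have span_C: "vec.span C \<subseteq> S" using C(2) \<open>vec.subspace S\<close> vec.span_minimal by blast
  have "inj_on F (vec.span (C - B))"
  proof (rule inj_onI)
    fix u w assume u: "u \<in> vec.span (C - B)" and w: "w \<in> vec.span (C - B)" and "F u = F w"
    have "u - w \<in> vec.span (C - B)" using u w vec.span_diff by blast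
    moreover have "u - w \<in> S" using calculation vec.span_mono[of "C - B" C] span_C by blast
    then have "u - w \<in> vec.span B" using \<open>F u = F w\<close> B(3) F.diff K_def by auto
    ultimately show "u = w" using span_Int_span_Diff_eq_0[OF C(3,1)] by (metis right_minus_eq)
  qed
  then have "card (C - B) = vec.dim (F ` (C - B))"
    using vec.dim_image_eq[OF lin] C(3) vec.independent_mono vec.dim_eq_card_independent
    by (metis Diff_subset)
  also have "\<dots> \<le> vec.dim (F ` S)" using C(2) by (intro vec.dim_subset) auto
  finally show ?thesis
    using vec.basis_card_eq_dim[OF C(2,4,3)] B(4) \<open>finite C\<close> C(1) K_def
    by (simp add: card_Diff_subset card_mono finite_subset)
qed

subsection \<open>Supports and powers of matrices\<close>

lemma sum_UNIV_eq_single: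
  assumes "\<And>l. l \<noteq> s \<Longrightarrow> f l = 0"
  shows "(\<Sum>l\<in>UNIV. f l) = f (s::'a::finite)"
  using sum.mono_neutral_right[of UNIV "{s}" f] assms by auto

lemma matrix_mult_entry_nonzeroD:
  assumes "(A ** B)$i$j \<noteq> (0::'a::semiring_1)"
  shows "\<exists>l. A$i$l \<noteq> 0 \<and> B$l$j \<noteq> 0"
proof (rule ccontr)
  assume "\<nexists>l. A$i$l \<noteq> 0 \<and> B$l$j \<noteq> 0"
  then have "(A ** B)$i$j = 0"
    by (auto simp: matrix_matrix_mult_def intro!: sum.neutral)
      (metis mult_zero_left mult_zero_right)
  then show False using assms by simp
qed

lemma mat_1_entry: "(mat 1 :: 'a::zero_neq_one^'n^'n) $ i $ j = (if i = j then 1 else 0)"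
  by (simp add: mat_def)

lemma transpose_zero [simp]: "transpose (0::'a::zero^'n^'m) = 0"
  by (simp add: transpose_def vec_eq_iff)

lemma transpose_add: "transpose (A + B) = transpose A + transpose (B::'a::monoid_add^'n^'m)"
  by (simp add: vec_eq_iff transpose_def)

lemma transpose_scale_mat: "transpose (scale_mat c A) = scale_mat c (transpose A)"
  by (simp add: vec_eq_iff transpose_def scale_mat_def)

definition supported_on :: "'n set \<Rightarrow> ('n::finite) cmat \<Rightarrow> bool" where
  "supported_on I A \<longleftrightarrow> (\<forall>i j. A$i$j \<noteq> 0 \<longrightarrow> i \<in> I \<and> j \<in> I)"

definition upper_on :: "'n set \<Rightarrow> ('n::{finite,linorder}) cmat \<Rightarrow> bool" where
  "upper_on I A \<longleftrightarrow> (\<forall>i j. A$i$j \<noteq> 0 \<longrightarrow> i \<le> j \<and> i \<in> I \<and> j \<in> I)"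

definition strictly_upper_on :: "'n set \<Rightarrow> ('n::{finite,linorder}) cmat \<Rightarrow> bool" where
  "strictly_upper_on I A \<longleftrightarrow> (\<forall>i j. A$i$j \<noteq> 0 \<longrightarrow> i < j \<and> i \<in> I \<and> j \<in> I)"

definition superdiag_nonzero_on :: "'n set \<Rightarrow> ('n::{finite,linorder}) cmat \<Rightarrow> bool" where
  "superdiag_nonzero_on I A \<longleftrightarrow>
     (\<forall>i\<in>I. \<forall>j\<in>I. i < j \<and> (\<forall>k\<in>I. \<not> (i < k \<and> k < j)) \<longrightarrow> A$i$j \<noteq> 0)"

lemma supported_on_iff: "supported_on I A \<longleftrightarrow> (\<forall>i j. \<not> (i \<in> I \<and> j \<in> I) \<longrightarrow> A$i$j = 0)"
  unfolding supported_on_def by blast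

lemma gl_full_eq: "gl_full = {A. supported_on UNIV A}"
  by (simp add: gl_full_def supported_on_def)

lemma gl_corner_eq: "gl_corner = {A. supported_on (- {last_idx}) A}"
  unfolding gl_corner_def supported_on_def by auto

abbreviation mpow :: "'a::semiring_1^'n::finite^'n \<Rightarrow> nat \<Rightarrow> 'a^'n^'n" where
  "mpow A m \<equiv> (((**) A) ^^ m) (mat 1)"

lemma mpow_Suc_right: "mpow A (Suc m) = mpow A m ** A"
  by (induction m) (simp_all add: matrix_mul_assoc)

lemma mpow_conj:
  assumes "k ** ki = mat 1" and "ki ** k = mat 1"
  shows "mpow (k ** u ** ki) m = k ** mpow u m ** ki"
proof (induction m)
  case 0
  show ?case using assms(1) by simp
next
  case (Suc m)
  have "mpow (k ** u ** ki) (Suc m) = k ** u ** (ki ** k) ** mpow u m ** ki"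
    using Suc by (simp add: matrix_mul_assoc)
  then show ?case using assms(2) by (simp add: matrix_mul_assoc)
qed

lemma mat_nilpotent_conj:
  assumes "k ** ki = mat 1" and "ki ** k = mat 1" and "mat_nilpotent u"
  shows "mat_nilpotent (k ** u ** ki)"
  using assms mpow_conj[OF assms(1,2)] unfolding mat_nilpotent_def
  by (metis times0_left times0_right)

lemma mpow_transpose:
  "mpow (transpose A) m = transpose (mpow (A::'a::comm_semiring_1^'n::finite^'n) m)"
proof (induction m)
  case (Suc m)
  have "transpose (mpow A (Suc m)) = transpose A ** transpose (mpow A m)"
    by (simp only: mpow_Suc_right matrix_transpose_mul)
  then show ?case using Suc by simp
qed simp

lemma mat_nilpotent_transpose:
  "mat_nilpotent (transpose A) \<longleftrightarrow> mat_nilpotent (A::('n::{finite,linorder}) cmat)"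
  unfolding mat_nilpotent_def mpow_transpose by (metis transpose_transpose transpose_zero)

lemma mpow_upper:
  fixes u :: "('n::{finite,linorder}) cmat"
  assumes "u \<in> borel_upper"
  shows "mpow u m \<in> borel_upper \<and> (\<forall>i. mpow u m $i$i = (u$i$i)^m)"
proof (induction m)
  case 0
  then show ?case by (simp add: borel_upper_def mat_1_entry)
next
  case (Suc m)
  have u: "u$i$l = 0" if "l < i" for i l
    using assms that unfolding borel_upper_def by blast
  have pow: "mpow u m $l$j = 0" if "j < l" for l j
    using Suc.IH that unfolding borel_upper_def by blast
  have "mpow u (Suc m) $i$j = 0" if "j < i" for i j
  proof -
    have "u$i$l * mpow u m $l$j = 0" for l
      using u[of l i] pow[of j l] that by (cases "l < i") auto
    then have "(\<Sum>l\<in>UNIV. u$i$l * mpow u m $l$j) = 0" by (intro sum.neutral) blast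
    then show ?thesis by (simp add: matrix_matrix_mult_def)
  qed
  moreover have "mpow u (Suc m) $i$i = u$i$i * mpow u m $i$i" for i
  proof -
    have "u$i$l * mpow u m $l$i = 0" if "l \<noteq> i" for l
      using u[of l i] pow[of i l] that by (cases "l < i") auto
    then have "(\<Sum>l\<in>UNIV. u$i$l * mpow u m $l$i) = u$i$i * mpow u m $i$i"
      by (rule sum_UNIV_eq_single)
    then show ?thesis by (simp add: matrix_matrix_mult_def)
  qed
  ultimately show ?case using Suc.IH unfolding borel_upper_def by simp
qed

lemma strictly_upper_of_upper_nilpotent:
  fixes u :: "('n::{finite,linorder}) cmat"
  assumes "u \<in> borel_upper" and "mat_nilpotent u"
  shows "strictly_upper_on UNIV u"
proof -
  obtain m where "mpow u m = 0" using assms(2) unfolding mat_nilpotent_def by blast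
  then have "(u$i$i)^m = 0" for i using mpow_upper[OF assms(1), of m] by simp
  then have "u$i$i = 0" for i by simp
  moreover have "\<not> j < i" if "u$i$j \<noteq> 0" for i j
    using assms(1) that unfolding borel_upper_def by blast
  ultimately show ?thesis
    unfolding strictly_upper_on_def by (metis UNIV_I linorder_less_linear)
qed

lemma strictly_upper_mpow_entry:
  fixes A :: "('n::{finite,linorder}) cmat"
  assumes "strictly_upper_on I A" and "mpow A m $i$j \<noteq> 0"
  shows "i \<le> j \<and> m \<le> card {k. i < k \<and> k \<le> j}"
  using assms(2)
proof (induction m arbitrary: i)
  case 0
  then show ?case by (simp add: mat_1_entry split: if_splits)
next
  case (Suc m)
  obtain l where l: "A$i$l \<noteq> 0" "mpow A m $l$j \<noteq> 0"
    using Suc.prems matrix_mult_entry_nonzeroD by fastforce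
  have "i < l" using assms(1) l(1) unfolding strictly_upper_on_def by blast
  moreover have "l \<le> j" and "m \<le> card {k. l < k \<and> k \<le> j}" using Suc.IH l(2) by auto
  moreover have "card (insert l {k. l < k \<and> k \<le> j}) \<le> card {k. i < k \<and> k \<le> j}"
    using calculation by (intro card_mono) auto
  ultimately show ?case by simp
qed

lemma mat_nilpotent_of_strictly_upper:
  fixes A :: "('n::{finite,linorder}) cmat"
  assumes "strictly_upper_on I A"
  shows "mat_nilpotent A"
proof -
  have "mpow A CARD('n) $i$j = 0" for i j
  proof (rule ccontr)
    assume "mpow A CARD('n) $i$j \<noteq> 0"
    then have "CARD('n) \<le> card {k. i < k \<and> k \<le> j}"
      using strictly_upper_mpow_entry[OF assms] by blast
    moreover have "card {k. i < k \<and> k \<le> j} \<le> card (UNIV - {i})"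
      by (rule card_mono) auto
    moreover have "card (UNIV - {i}) < CARD('n)"
      by (simp add: card_Diff_singleton)
    ultimately show False by simp
  qed
  then have "mpow A CARD('n) = 0" by (simp add: vec_eq_iff)
  then show ?thesis unfolding mat_nilpotent_def by blast
qed

subsection \<open>The corner, the group \<open>K\<close> and transposition\<close>

definition proj_corner :: "('n::{finite,linorder}) cmat" where
  "proj_corner = (\<chi> i j. if i = j \<and> i \<noteq> last_idx then 1 else 0)"

lemma proj_corner_mult_entry: "(proj_corner ** A)$i$j = (if i \<noteq> last_idx then A$i$j else 0)"
proof -
  have "(proj_corner ** A)$i$j = (\<Sum>l\<in>UNIV. proj_corner$i$l * A$l$j)"
    by (simp add: matrix_matrix_mult_def)
  also have "\<dots> = proj_corner$i$i * A$i$j"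
    by (rule sum_UNIV_eq_single) (simp add: proj_corner_def)
  finally show ?thesis by (simp add: proj_corner_def)
qed

lemma mult_proj_corner_entry: "(A ** proj_corner)$i$j = (if j \<noteq> last_idx then A$i$j else 0)"
proof -
  have "(A ** proj_corner)$i$j = (\<Sum>l\<in>UNIV. A$i$l * proj_corner$l$j)"
    by (simp add: matrix_matrix_mult_def)
  also have "\<dots> = A$i$j * proj_corner$j$j"
    by (rule sum_UNIV_eq_single) (simp add: proj_corner_def)
  finally show ?thesis by (simp add: proj_corner_def)
qed

lemma corner_eq_proj: "corner A = proj_corner ** A ** proj_corner"
  by (simp add: vec_eq_iff corner_def proj_corner_mult_entry mult_proj_corner_entry)

lemma gl_corner_iff_corner_eq: "A \<in> gl_corner \<longleftrightarrow> corner A = A"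
  unfolding gl_corner_def corner_def by (auto simp: vec_eq_iff)

lemma corner_in_gl_corner: "corner A \<in> gl_corner"
  unfolding gl_corner_def corner_def by auto

lemma corner_transpose: "corner (transpose A) = transpose (corner A)"
  by (simp add: vec_eq_iff corner_def transpose_def)

lemma transpose_in_gl_corner_iff: "transpose A \<in> gl_corner \<longleftrightarrow> A \<in> gl_corner"
  unfolding gl_corner_def by (auto simp: transpose_def)

definition block_diag :: "('n::{finite,linorder}) cmat \<Rightarrow> bool" where
  "block_diag k \<longleftrightarrow> (\<forall>i. i \<noteq> last_idx \<longrightarrow> k $ i $ last_idx = 0 \<and> k $ last_idx $ i = 0)"

lemma K_grp_iff: "k \<in> K_grp \<longleftrightarrow> invertible k \<and> block_diag k"
  unfolding K_grp_def block_diag_def by blast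

lemma block_diag_commute_proj_corner: "block_diag k \<Longrightarrow> k ** proj_corner = proj_corner ** k"
  unfolding block_diag_def by (auto simp: vec_eq_iff proj_corner_mult_entry mult_proj_corner_entry)

lemma corner_conj:
  assumes "block_diag k" and "block_diag ki"
  shows "corner (k ** u ** ki) = k ** corner u ** ki"
proof -
  have "corner (k ** u ** ki) = (proj_corner ** k) ** u ** (ki ** proj_corner)"
    by (simp only: corner_eq_proj matrix_mul_assoc)
  also have "\<dots> = (k ** proj_corner) ** u ** (proj_corner ** ki)"
    by (simp only: block_diag_commute_proj_corner[OF assms(1)]
        block_diag_commute_proj_corner[OF assms(2)])
  also have "\<dots> = k ** corner u ** ki"
    by (simp only: corner_eq_proj matrix_mul_assoc)
  finally show ?thesis .
qed

lemma conj_in_gl_corner: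
  assumes "block_diag k" and "block_diag ki" and "A \<in> gl_corner"
  shows "k ** A ** ki \<in> gl_corner"
  using assms(3) corner_conj[OF assms(1,2), of A] by (simp add: gl_corner_iff_corner_eq)

lemma block_diag_inverse:
  assumes k: "block_diag k" and "k ** ki = mat 1" and "ki ** k = mat 1"
  shows "block_diag ki"
proof -
  let ?L = "last_idx"
  have "(k ** ki)$?L$j = k$?L$?L * ki$?L$j" for j
    unfolding matrix_matrix_mult_def using k
    by (simp, intro sum_UNIV_eq_single) (simp add: block_diag_def)
  moreover have "(ki ** k)$i$?L = ki$i$?L * k$?L$?L" for i
    unfolding matrix_matrix_mult_def using k
    by (simp, intro sum_UNIV_eq_single) (simp add: block_diag_def)
  ultimately have row: "k$?L$?L * ki$?L$j = (if ?L = j then 1 else 0)"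
    and col: "ki$i$?L * k$?L$?L = (if i = ?L then 1 else 0)" for i j
    using assms(2,3) by (simp_all add: mat_1_entry)
  have "k$?L$?L \<noteq> 0" using row[of ?L] by auto
  then have "ki$i$?L = 0 \<and> ki$?L$i = 0" if "i \<noteq> ?L" for i
    using row[of i] col[of i] that by auto
  then show ?thesis unfolding block_diag_def by blast
qed

lemma conj_conj_cancel:
  fixes k ki :: "('n::{finite,linorder}) cmat"
  assumes "k ** ki = mat 1" and "ki ** k = mat 1"
  shows "ki ** (k ** y ** ki) ** k = y" and "k ** (ki ** y ** k) ** ki = y"
proof -
  have "X ** k ** ki = X" "X ** ki ** k = X" for X :: "'n cmat"
    using assms by (simp_all flip: matrix_mul_assoc)
  then show "ki ** (k ** y ** ki) ** k = y" and "k ** (ki ** y ** k) ** ki = y"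
    using assms by (simp_all add: matrix_mul_assoc)
qed

lemma commute_conj_iff:
  fixes k ki :: "('n::{finite,linorder}) cmat"
  assumes "k ** ki = mat 1" and "ki ** k = mat 1"
  shows "z ** (k ** a ** ki) = (k ** a ** ki) ** z \<longleftrightarrow>
    (ki ** z ** k) ** a = a ** (ki ** z ** k)"
proof -
  have cancel: "X ** k ** ki = X" "X ** ki ** k = X" for X :: "'n cmat"
    using assms by (simp_all flip: matrix_mul_assoc)
  have "z ** (k ** a ** ki) = (k ** a ** ki) ** z \<longleftrightarrow>
      ki ** (z ** (k ** a ** ki)) ** k = ki ** ((k ** a ** ki) ** z) ** k"
    by (metis conj_conj_cancel(2)[OF assms])
  also have "\<dots> \<longleftrightarrow> (ki ** z ** k) ** a = a ** (ki ** z ** k)"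
    using assms by (simp add: matrix_mul_assoc cancel)
  finally show ?thesis .
qed

lemma centralizer_conj:
  fixes k ki :: "('n::{finite,linorder}) cmat"
  assumes inv: "k ** ki = mat 1" "ki ** k = mat 1"
    and "\<And>A. A \<in> L \<Longrightarrow> k ** A ** ki \<in> L" and "\<And>A. A \<in> L \<Longrightarrow> ki ** A ** k \<in> L"
  shows "centralizer L (k ** a ** ki) = (\<lambda>y. k ** y ** ki) ` centralizer L a"
proof (intro equalityI subsetI)
  fix z assume "z \<in> centralizer L (k ** a ** ki)"
  then have "ki ** z ** k \<in> centralizer L a"
    using assms(4) commute_conj_iff[OF inv] unfolding centralizer_def by auto
  moreover have "z = k ** (ki ** z ** k) ** ki" using conj_conj_cancel(2)[OF inv] by simp
  ultimately show "z \<in> (\<lambda>y. k ** y ** ki) ` centralizer L a" by blast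
next
  fix z assume "z \<in> (\<lambda>y. k ** y ** ki) ` centralizer L a"
  then obtain y where y: "y \<in> L" "y ** a = a ** y" and z: "z = k ** y ** ki"
    unfolding centralizer_def by auto
  have "ki ** z ** k = y" using z conj_conj_cancel(1)[OF inv] by simp
  then show "z \<in> centralizer L (k ** a ** ki)"
    using commute_conj_iff[OF inv, of z a] assms(3) y z unfolding centralizer_def by simp
qed

lemma cdim_conj:
  fixes k ki :: "('n::{finite,linorder}) cmat"
  assumes "k ** ki = mat 1" and "ki ** k = mat 1"
  shows "cdim ((\<lambda>y. k ** y ** ki) ` S) = cdim S"
proof (rule cdim_linear_image)
  show "k ** (A + B) ** ki = k ** A ** ki + k ** B ** ki" for A B
    by (simp add: matrix_add_ldistrib matrix_add_rdistrib)
  show "k ** scale_mat c A ** ki = scale_mat c (k ** A ** ki)" for c A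
    by (simp add: matrix_mul_scale_mat scale_mat_matrix_mul)
  show "inj (\<lambda>y. k ** y ** ki)"
  proof (rule injI)
    fix A B assume "k ** A ** ki = k ** B ** ki"
    then have "ki ** (k ** A ** ki) ** k = ki ** (k ** B ** ki) ** k" by simp
    then show "A = B" by (simp only: conj_conj_cancel(1)[OF assms])
  qed
qed

lemma centralizer_transpose:
  assumes "\<And>A. transpose A \<in> L \<longleftrightarrow> A \<in> L"
  shows "centralizer L (transpose a) = transpose ` centralizer L (a::('n::{finite,linorder}) cmat)"
proof -
  have transpose_eq_iff: "X = Y \<longleftrightarrow> transpose X = transpose Y" for X Y :: "'n cmat"
    by (metis transpose_transpose)
  have "y ** transpose a = transpose a ** y \<longleftrightarrow> transpose y ** a = a ** transpose y" for y
    by (subst transpose_eq_iff) (simp add: matrix_transpose_mul eq_commute)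
  then have mem: "y \<in> centralizer L (transpose a) \<longleftrightarrow> transpose y \<in> centralizer L a" for y
    using assms unfolding centralizer_def by auto
  show ?thesis
  proof (intro equalityI subsetI)
    fix y assume "y \<in> centralizer L (transpose a)"
    then show "y \<in> transpose ` centralizer L a" using mem by (metis image_eqI transpose_transpose)
  qed (auto simp: mem)
qed

lemma cdim_transpose: "cdim (transpose ` S) = cdim (S :: ('n::{finite,linorder}) cmat set)"
proof (rule cdim_linear_image)
  show "inj (transpose :: 'n cmat \<Rightarrow> 'n cmat)"
    by (rule injI) (metis transpose_transpose)
qed (simp_all add: transpose_add transpose_scale_mat)

lemma regular_nilpotent_g_conj_iff:
  fixes k ki :: "('n::{finite,linorder}) cmat"
  assumes inv: "k ** ki = mat 1" "ki ** k = mat 1"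
  shows "regular_nilpotent_g (k ** u ** ki) \<longleftrightarrow> regular_nilpotent_g u"
proof -
  have "mat_nilpotent (k ** u ** ki) \<longleftrightarrow> mat_nilpotent u"
    using mat_nilpotent_conj[OF inv] mat_nilpotent_conj[OF inv(2,1), of "k ** u ** ki"]
    by (auto simp: conj_conj_cancel[OF inv])
  moreover have "centralizer gl_full (k ** u ** ki) = (\<lambda>y. k ** y ** ki) ` centralizer gl_full u"
    by (rule centralizer_conj[OF inv]) (auto simp: gl_full_def)
  ultimately show ?thesis
    unfolding regular_nilpotent_g_def by (simp add: cdim_conj[OF inv])
qed

lemma regular_nilpotent_gn_corner_conj:
  fixes k ki :: "('n::{finite,linorder}) cmat"
  assumes inv: "k ** ki = mat 1" "ki ** k = mat 1" and "block_diag k" "block_diag ki"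
    and "regular_nilpotent_gn (corner u)"
  shows "regular_nilpotent_gn (corner (k ** u ** ki))"
proof -
  have "centralizer gl_corner (k ** corner u ** ki)
      = (\<lambda>y. k ** y ** ki) ` centralizer gl_corner (corner u)"
    using assms(3,4) by (intro centralizer_conj[OF inv] conj_in_gl_corner)
  then show ?thesis
    using assms(5) mat_nilpotent_conj[OF inv] conj_in_gl_corner[OF assms(3,4)]
    unfolding regular_nilpotent_gn_def corner_conj[OF assms(3,4)] by (simp add: cdim_conj[OF inv])
qed

lemma centralizer_gl_corner_conj_eq_0:
  fixes k ki :: "('n::{finite,linorder}) cmat"
  assumes inv: "k ** ki = mat 1" "ki ** k = mat 1" and "block_diag k" "block_diag ki"
    and "centralizer gl_corner u = {0}"
  shows "centralizer gl_corner (k ** u ** ki) = {0}"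
proof -
  have "centralizer gl_corner (k ** u ** ki) = (\<lambda>y. k ** y ** ki) ` centralizer gl_corner u"
    using assms(3,4) by (intro centralizer_conj[OF inv] conj_in_gl_corner)
  then show ?thesis using assms(5) by simp
qed

lemma regular_nilpotent_g_transpose:
  "regular_nilpotent_g (transpose u) \<longleftrightarrow> regular_nilpotent_g (u::('n::{finite,linorder}) cmat)"
  unfolding regular_nilpotent_g_def
  by (simp add: centralizer_transpose gl_full_def cdim_transpose mat_nilpotent_transpose)

lemma regular_nilpotent_gn_transpose:
  "regular_nilpotent_gn (transpose v) \<longleftrightarrow> regular_nilpotent_gn (v::('n::{finite,linorder}) cmat)"
  unfolding regular_nilpotent_gn_def
  by (simp add: centralizer_transpose transpose_in_gl_corner_iff cdim_transpose
      mat_nilpotent_transpose)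

subsection \<open>Centralizers of strictly upper triangular matrices\<close>

lemma matrix_vector_mult_axis: "(A *v axis j 1)$i = (A$i$j :: 'a::semiring_1)"
proof -
  have "(A *v axis j 1)$i = (\<Sum>l\<in>UNIV. A$i$l * axis j 1 $ l)"
    by (simp add: matrix_vector_mult_def)
  also have "\<dots> = A$i$j * axis j 1 $ j"
    by (rule sum_UNIV_eq_single) (simp add: axis_def)
  finally show ?thesis by (simp add: axis_def)
qed

text \<open>The kernel of \<open>y\<close> is \<open>x\<close>-invariant and contains the basis vector of index \<open>Max I\<close>;
  applying \<open>x\<close> moves the leading entry of a kernel vector to the predecessor in \<open>I\<close>.\<close>
lemma kernel_vector_with_leading_entry:
  fixes x y :: "('n::{finite,linorder}) cmat"
  assumes x: "strictly_upper_on I x" "superdiag_nonzero_on I x"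
    and "x ** y = y ** x" and y_last: "\<forall>k. y$k$Max I = 0" and "i \<in> I"
  shows "\<exists>w. y *v w = 0 \<and> w$i \<noteq> 0 \<and> (\<forall>k. w$k \<noteq> 0 \<longrightarrow> k \<in> I \<and> k \<le> i)"
  using \<open>i \<in> I\<close>
proof (induction "card {k\<in>I. i < k}" arbitrary: i rule: less_induct)
  case less
  have kernel_closed: "y *v (x *v w) = 0" if "y *v w = 0" for w
    using that \<open>x ** y = y ** x\<close> by (metis matrix_vector_mul_assoc matrix_vector_mult_0_right)
  show ?case
  proof (cases "i = Max I")
    case True
    have "y *v axis i 1 = 0"
      using y_last True by (simp add: vec_eq_iff matrix_vector_mult_axis)
    then show ?thesis using less.prems True by (intro exI[of _ "axis i 1"]) (auto simp: axis_def)
  next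
    case False
    define s where "s = Min {k\<in>I. i < k}"
    have "Max I \<in> I" using less.prems by (intro Max_in) auto
    then have "Max I \<in> {k\<in>I. i < k}"
      using False less.prems by (auto simp: le_neq_trans)
    then have "s \<in> {k\<in>I. i < k}"
      unfolding s_def by (intro Min_in) auto
    then have s: "s \<in> I" "i < s" by auto
    have s_min: "s \<le> k" if "k \<in> I" "i < k" for k
      unfolding s_def using that by (intro Min_le) auto
    have "card {k\<in>I. s < k} < card {k\<in>I. i < k}"
      using s by (intro psubset_card_mono) auto
    then obtain w where w: "y *v w = 0" "w$s \<noteq> 0" and w_supp: "\<And>k. w$k \<noteq> 0 \<Longrightarrow> k \<in> I \<and> k \<le> s"
      using less.hyps s(1) by blast
    have entry: "x$k$l * w$l \<noteq> 0 \<Longrightarrow> k \<in> I \<and> k < l \<and> l \<in> I \<and> l \<le> s" for k l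
      using x(1) w_supp unfolding strictly_upper_on_def by (metis mult_eq_0_iff)
    have "(x *v w)$k = 0" if "\<not> (k \<in> I \<and> k \<le> i)" for k
      using that entry s_min by (force simp: matrix_vector_mult_def intro!: sum.neutral)
    then have "(x *v w)$k \<noteq> 0 \<Longrightarrow> k \<in> I \<and> k \<le> i" for k by blast
    moreover have "(x *v w)$i = x$i$s * w$s"
      unfolding matrix_vector_mult_def using entry s_min
      by (simp, intro sum_UNIV_eq_single) (meson antisym less.prems)
    moreover have "x$i$s \<noteq> 0"
      using x(2) less.prems s s_min unfolding superdiag_nonzero_on_def by (meson leD)
    ultimately show ?thesis
      using w kernel_closed by (intro exI[of _ "x *v w"]) auto
  qed
qed

lemma column_eq_0_of_kernel_vectors:
  fixes y :: "'a::field^('n::{finite,linorder})^('n::{finite,linorder})"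
  assumes kernel: "\<And>i. i \<in> I \<Longrightarrow> \<exists>w. y *v w = 0 \<and> w$i \<noteq> 0 \<and> (\<forall>k. w$k \<noteq> 0 \<longrightarrow> k \<in> I \<and> k \<le> i)"
    and "i \<in> I"
  shows "y$k$i = 0"
  using \<open>i \<in> I\<close>
proof (induction "card {l\<in>I. l < i}" arbitrary: i rule: less_induct)
  case less
  obtain w where w: "y *v w = 0" "w$i \<noteq> 0" and w_supp: "\<And>l. w$l \<noteq> 0 \<Longrightarrow> l \<in> I \<and> l \<le> i"
    using kernel[OF less.prems] by blast
  have other: "y$k$l * w$l = 0" if "l \<noteq> i" for l
  proof (cases "w$l = 0")
    case False
    then have "l \<in> I" "l < i" using w_supp[of l] that by auto
    then have "card {j\<in>I. j < l} < card {j\<in>I. j < i}"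
      using less.prems by (intro psubset_card_mono) auto
    then show ?thesis using less.hyps \<open>l \<in> I\<close> by simp
  qed simp
  have "(y *v w)$k = (\<Sum>l\<in>UNIV. y$k$l * w$l)"
    by (simp add: matrix_vector_mult_def)
  also have "\<dots> = y$k$i * w$i"
    using other by (rule sum_UNIV_eq_single)
  finally show ?case using w by simp
qed

lemma commuting_eq_0_of_last_column_eq_0:
  fixes x y :: "('n::{finite,linorder}) cmat"
  assumes "strictly_upper_on I x" and "superdiag_nonzero_on I x"
    and "supported_on I y" and "x ** y = y ** x" and "\<forall>k. y$k$Max I = 0"
  shows "y = 0"
proof -
  have "y$k$i = 0" for k i
  proof (cases "i \<in> I")
    case True
    show ?thesis
      using kernel_vector_with_leading_entry[OF assms(1,2,4,5)] True
      by (rule column_eq_0_of_kernel_vectors)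
  next
    case False
    then show ?thesis using assms(3) unfolding supported_on_def by blast
  qed
  then show ?thesis by (simp add: vec_eq_iff)
qed

lemma commutator_strictly_upper_on:
  fixes x y :: "('n::{finite,linorder}) cmat"
  assumes x: "strictly_upper_on I x" and y: "upper_on I y"
  shows "strictly_upper_on I (x ** y - y ** x)"
  unfolding strictly_upper_on_def
proof (intro allI impI)
  fix i j assume "(x ** y - y ** x)$i$j \<noteq> 0"
  then have "(x ** y)$i$j \<noteq> 0 \<or> (y ** x)$i$j \<noteq> 0" by auto
  then obtain l where "x$i$l \<noteq> 0 \<and> y$l$j \<noteq> 0 \<or> y$i$l \<noteq> 0 \<and> x$l$j \<noteq> 0"
    by (metis matrix_mult_entry_nonzeroD)
  then show "i < j \<and> i \<in> I \<and> j \<in> I"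
    using x y unfolding strictly_upper_on_def upper_on_def by (meson le_less_trans less_le_trans)
qed

lemma linear_flattened_commutator:
  fixes x :: "('n::{finite,linorder}) cmat"
  shows "Vector_Spaces.linear (*s) (*s) (\<lambda>v. flat_mat (x ** unflat_mat v - unflat_mat v ** x))"
proof (rule linear_flattened)
  show "x ** (A + B) - (A + B) ** x = (x ** A - A ** x) + (x ** B - B ** x)" for A B
    by (simp add: matrix_add_ldistrib matrix_add_rdistrib)
  show "x ** scale_mat c A - scale_mat c A ** x = scale_mat c (x ** A - A ** x)" for c A
    by (simp add: matrix_mul_scale_mat scale_mat_matrix_mul scale_mat_diff)
qed

lemma card_upper_pairs:
  fixes I :: "'n::{finite,linorder} set"
  shows "card {p. fst p \<le> snd p \<and> fst p \<in> I \<and> snd p \<in> I}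
    = card I + card {p. fst p < snd p \<and> fst p \<in> I \<and> snd p \<in> I}"
proof -
  have "{p. fst p \<le> snd p \<and> fst p \<in> I \<and> snd p \<in> I}
      = (\<lambda>i. (i, i)) ` I \<union> {p. fst p < snd p \<and> fst p \<in> I \<and> snd p \<in> I}"
    by (auto simp: le_less image_iff)
  moreover have "card ((\<lambda>i. (i, i)) ` I) = card I" by (simp add: card_image inj_on_def)
  moreover have "(\<lambda>i. (i, i)) ` I \<inter> {p. fst p < snd p \<and> fst p \<in> I \<and> snd p \<in> I} = {}" by auto
  ultimately show ?thesis by (simp add: card_Un_disjoint)
qed

text \<open>The commutator with \<open>x\<close> maps the upper triangular matrices supported on \<open>I\<close> into the
  strictly upper triangular ones vanishing on \<open>E\<close>; rank-nullity bounds its kernel, the centralizer,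
  from below.\<close>
lemma card_add_card_le_cdim_centralizer:
  fixes x :: "('n::{finite,linorder}) cmat"
  assumes x: "strictly_upper_on I x"
    and E: "E \<subseteq> {p. fst p < snd p \<and> fst p \<in> I \<and> snd p \<in> I}"
    and vanish: "\<And>y p. upper_on I y \<Longrightarrow> p \<in> E \<Longrightarrow> (x ** y - y ** x) $ fst p $ snd p = 0"
  shows "card I + card E \<le> cdim (centralizer {y. supported_on I y} x)"
proof -
  define Upper where "Upper = {p::'n \<times> 'n. fst p \<le> snd p \<and> fst p \<in> I \<and> snd p \<in> I}"
  define Strict where "Strict = {p::'n \<times> 'n. fst p < snd p \<and> fst p \<in> I \<and> snd p \<in> I}"
  define S where "S = {v::complex^('n \<times> 'n). \<forall>p. p \<notin> Upper \<longrightarrow> v$p = 0}"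
  define T where "T = {v::complex^('n \<times> 'n). \<forall>p. p \<notin> Strict - E \<longrightarrow> v$p = 0}"
  define F where "F = (\<lambda>v. flat_mat (x ** unflat_mat v - unflat_mat v ** x))"
  have upper: "upper_on I (unflat_mat v)" if "v \<in> S" for v
    unfolding upper_on_def
  proof (intro allI impI)
    fix i j assume "unflat_mat v $ i $ j \<noteq> 0"
    then have "(i, j) \<in> Upper" using that unfolding S_def unflat_mat_def by auto
    then show "i \<le> j \<and> i \<in> I \<and> j \<in> I" unfolding Upper_def by simp
  qed
  have image: "F ` S \<subseteq> T"
  proof (rule image_subsetI)
    fix v assume "v \<in> S"
    let ?C = "x ** unflat_mat v - unflat_mat v ** x"
    have "strictly_upper_on I ?C"
      using commutator_strictly_upper_on[OF x upper[OF \<open>v \<in> S\<close>]] .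
    then have zero: "?C $ fst p $ snd p = 0" if "p \<notin> Strict - E" for p
      using that vanish[OF upper[OF \<open>v \<in> S\<close>]] unfolding strictly_upper_on_def Strict_def by blast
    show "F v \<in> T"
      unfolding T_def F_def flat_mat_def by (intro CollectI allI impI, subst vec_lambda_beta, rule zero)
  qed
  have kernel: "S \<inter> {v. F v = 0} \<subseteq> flat_mat ` centralizer {y. supported_on I y} x"
  proof
    fix v assume v: "v \<in> S \<inter> {v. F v = 0}"
    then have "flat_mat (x ** unflat_mat v - unflat_mat v ** x) = flat_mat 0"
      unfolding F_def by simp
    then have "x ** unflat_mat v - unflat_mat v ** x = 0"
      by (metis unflat_mat_flat_mat)
    moreover have "supported_on I (unflat_mat v)"
      using upper v unfolding upper_on_def supported_on_def by blast
    ultimately have "unflat_mat v \<in> centralizer {y. supported_on I y} x"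
      unfolding centralizer_def by simp
    then show "v \<in> flat_mat ` centralizer {y. supported_on I y} x"
      by (metis flat_mat_unflat_mat image_eqI)
  qed
  have "vec.dim S \<le> vec.dim (S \<inter> {v. F v = 0}) + vec.dim (F ` S)"
    unfolding F_def
    by (rule dim_le_dim_kernel_add_dim_image[OF linear_flattened_commutator])
       (auto simp: vec.subspace_def S_def)
  moreover have "vec.dim S = card Upper"
    unfolding S_def by (rule dim_substandard_cart)
  moreover have "vec.dim (S \<inter> {v. F v = 0}) \<le> cdim (centralizer {y. supported_on I y} x)"
    unfolding cdim_def using kernel by (rule vec.dim_subset)
  moreover have "vec.dim T = card (Strict - E)"
    unfolding T_def by (rule dim_substandard_cart)
  then have "vec.dim (F ` S) \<le> card (Strict - E)"
    using vec.dim_subset[OF image] by simp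
  moreover have "card Upper = card I + card Strict"
    unfolding Upper_def Strict_def by (rule card_upper_pairs)
  moreover have "card (Strict - E) + card E = card Strict"
    using E unfolding Strict_def by (simp add: card_Diff_subset card_mono)
  ultimately show ?thesis by linarith
qed

lemma vec_subspace_flat_mat_centralizer:
  fixes a :: "('n::{finite,linorder}) cmat"
  shows "vec.subspace (flat_mat ` centralizer {y. supported_on I y} a)"
proof (rule vec_subspace_flat_mat_image)
  show "0 \<in> centralizer {y. supported_on I y} a"
    by (simp add: centralizer_def supported_on_def)
  show "A + B \<in> centralizer {y. supported_on I y} a"
    if "A \<in> centralizer {y. supported_on I y} a" "B \<in> centralizer {y. supported_on I y} a" for A B
    using that unfolding centralizer_def supported_on_iff
    by (simp add: matrix_add_ldistrib matrix_add_rdistrib)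
  show "scale_mat c A \<in> centralizer {y. supported_on I y} a"
    if "A \<in> centralizer {y. supported_on I y} a" for c A
    using that unfolding centralizer_def supported_on_iff
    by (simp add: matrix_mul_scale_mat scale_mat_matrix_mul) (simp add: scale_mat_def)
qed

text \<open>Restriction to the last column \<open>Max I\<close> is injective on the centralizer.\<close>
lemma cdim_centralizer_le_card:
  fixes x :: "('n::{finite,linorder}) cmat"
  assumes x: "strictly_upper_on I x" "superdiag_nonzero_on I x"
  shows "cdim (centralizer {y. supported_on I y} x) \<le> card I"
proof -
  let ?C = "centralizer {y. supported_on I y} x"
  define G where "G = (\<lambda>v::complex^('n \<times> 'n). \<chi> k. v $ (k, Max I))"
  have "Vector_Spaces.linear (*s) (*s) G"
    unfolding Vector_Spaces.linear_iff G_def by (simp add: vec.vector_space_axioms vec_eq_iff)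
  moreover have "inj_on G (vec.span (flat_mat ` ?C))"
  proof -
    have "inj_on G (flat_mat ` ?C)"
    proof (rule inj_onI)
      fix v w assume "v \<in> flat_mat ` ?C" "w \<in> flat_mat ` ?C" and "G v = G w"
      then obtain y1 y2 where y: "y1 \<in> ?C" "y2 \<in> ?C" and vw: "v = flat_mat y1" "w = flat_mat y2"
        and "G (flat_mat y1) = G (flat_mat y2)" by blast
      then have "\<forall>k. (y1 - y2)$k$Max I = 0"
        unfolding G_def flat_mat_def by (simp add: vec_eq_iff)
      moreover have "supported_on I (y1 - y2)" and "x ** (y1 - y2) = (y1 - y2) ** x"
        using y unfolding centralizer_def supported_on_iff
        by (simp_all add: matrix_diff_ldistrib matrix_diff_rdistrib)
      ultimately have "y1 - y2 = 0" using commuting_eq_0_of_last_column_eq_0[OF x] by blast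
      then show "v = w" using vw by simp
    qed
    then show ?thesis
      using vec_subspace_flat_mat_centralizer vec.span_eq_iff by metis
  qed
  ultimately have "cdim ?C = vec.dim (G ` flat_mat ` ?C)"
    unfolding cdim_def by (simp add: vec.dim_image_eq)
  also have "\<dots> \<le> vec.dim {w::complex^('n::{finite,linorder}). \<forall>k. k \<notin> I \<longrightarrow> w$k = 0}"
    by (rule vec.dim_subset)
       (auto simp: G_def flat_mat_def centralizer_def supported_on_iff)
  also have "\<dots> = card I" by (rule dim_substandard_cart)
  finally show ?thesis .
qed

lemma superdiag_nonzero_of_cdim_centralizer:
  fixes x :: "('n::{finite,linorder}) cmat"
  assumes x: "strictly_upper_on I x"
    and cdim: "cdim (centralizer {y. supported_on I y} x) = card I"
  shows "superdiag_nonzero_on I x"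
  unfolding superdiag_nonzero_on_def
proof (intro ballI impI notI)
  fix i j assume ij: "i \<in> I" "j \<in> I" "i < j \<and> (\<forall>k\<in>I. \<not> (i < k \<and> k < j))" and "x$i$j = 0"
  have "(x ** y - y ** x) $ i $ j = 0" if y: "upper_on I y" for y
  proof -
    have "(x ** y)$i$j = 0"
    proof (rule ccontr)
      assume "(x ** y)$i$j \<noteq> 0"
      then obtain l where "x$i$l \<noteq> 0" "y$l$j \<noteq> 0" by (metis matrix_mult_entry_nonzeroD)
      with x y ij \<open>x$i$j = 0\<close> show False
        unfolding strictly_upper_on_def upper_on_def by (metis order.not_eq_order_implies_strict)
    qed
    moreover have "(y ** x)$i$j = 0"
    proof (rule ccontr)
      assume "(y ** x)$i$j \<noteq> 0"
      then obtain l where "y$i$l \<noteq> 0" "x$l$j \<noteq> 0" by (metis matrix_mult_entry_nonzeroD)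
      with x y ij \<open>x$i$j = 0\<close> show False
        unfolding strictly_upper_on_def upper_on_def by (metis order.not_eq_order_implies_strict)
    qed
    ultimately show ?thesis by simp
  qed
  then have "card I + card {(i, j)} \<le> cdim (centralizer {y. supported_on I y} x)"
    using ij by (intro card_add_card_le_cdim_centralizer[OF x]) auto
  then show False using cdim by simp
qed

lemma cdim_centralizer_eq_card:
  fixes x :: "('n::{finite,linorder}) cmat"
  assumes "strictly_upper_on I x" and "superdiag_nonzero_on I x"
  shows "cdim (centralizer {y. supported_on I y} x) = card I"
  using card_add_card_le_cdim_centralizer[OF assms(1), of "{}"] cdim_centralizer_le_card[OF assms]
  by simp

subsection \<open>Regular nilpotent elements of the Borel subalgebras\<close>

lemma last_idx_greatest: "i \<le> last_idx"
  unfolding last_idx_def by simp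

lemma corner_strictly_upper_on:
  fixes u :: "('n::{finite,linorder}) cmat"
  assumes "strictly_upper_on UNIV u"
  shows "strictly_upper_on (- {last_idx}) (corner u)"
  using assms unfolding strictly_upper_on_def corner_def by simp

text \<open>As \<open>last_idx\<close> is the greatest index, consecutive elements of \<open>- {last_idx}\<close> are consecutive
  indices.\<close>
lemma corner_superdiag_nonzero_on:
  fixes u :: "('n::{finite,linorder}) cmat"
  assumes "superdiag_nonzero_on UNIV u"
  shows "superdiag_nonzero_on (- {last_idx}) (corner u)"
  unfolding superdiag_nonzero_on_def
proof (intro ballI impI)
  fix i j :: 'n assume ij: "i \<in> - {last_idx}" "j \<in> - {last_idx}"
    "i < j \<and> (\<forall>k\<in>- {last_idx}. \<not> (i < k \<and> k < j))"
  moreover have "k \<noteq> last_idx" if "k < j" for k :: 'n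
    using that last_idx_greatest[of j] by auto
  ultimately have "u$i$j \<noteq> 0" using assms unfolding superdiag_nonzero_on_def by blast
  then show "corner u $ i $ j \<noteq> 0" using ij(1,2) by (simp add: corner_def)
qed

lemma regular_upper_strictly_upper_superdiag:
  fixes u :: "('n::{finite,linorder}) cmat"
  assumes "u \<in> borel_upper" and "regular_nilpotent_g u"
  shows "strictly_upper_on UNIV u" and "superdiag_nonzero_on UNIV u"
proof -
  show strict: "strictly_upper_on UNIV u"
    using assms strictly_upper_of_upper_nilpotent unfolding regular_nilpotent_g_def by blast
  show "superdiag_nonzero_on UNIV u"
    using assms(2) by (intro superdiag_nonzero_of_cdim_centralizer[OF strict])
      (simp add: regular_nilpotent_g_def gl_full_eq)
qed

lemma regular_nilpotent_gn_corner_of_upper: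
  fixes u :: "('n::{finite,linorder}) cmat"
  assumes "u \<in> borel_upper" and "regular_nilpotent_g u"
  shows "regular_nilpotent_gn (corner u)"
proof -
  note corner = corner_strictly_upper_on[OF regular_upper_strictly_upper_superdiag(1)[OF assms]]
    corner_superdiag_nonzero_on[OF regular_upper_strictly_upper_superdiag(2)[OF assms]]
  have "card (- {last_idx :: 'n}) = CARD('n) - 1"
    by (simp add: Compl_eq_Diff_UNIV card_Diff_singleton)
  then show ?thesis
    unfolding regular_nilpotent_gn_def
    using cdim_centralizer_eq_card[OF corner] mat_nilpotent_of_strictly_upper[OF corner(1)]
      corner_in_gl_corner[of u] by (simp add: gl_corner_eq)
qed

lemma centralizer_gl_corner_eq_0_of_upper:
  fixes u :: "('n::{finite,linorder}) cmat"
  assumes "u \<in> borel_upper" and "regular_nilpotent_g u"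
  shows "centralizer gl_corner u = {0}"
proof -
  have "y = 0" if "y \<in> centralizer gl_corner u" for y
  proof (rule commuting_eq_0_of_last_column_eq_0)
    show "strictly_upper_on UNIV u" and "superdiag_nonzero_on UNIV u"
      using regular_upper_strictly_upper_superdiag[OF assms] by blast+
    show "supported_on UNIV y" by (simp add: supported_on_def)
    show "u ** y = y ** u" using that unfolding centralizer_def by simp
    show "\<forall>k. y$k$Max UNIV = 0"
      using that unfolding centralizer_def gl_corner_def last_idx_def by simp
  qed
  moreover have "0 \<in> centralizer gl_corner u" by (simp add: centralizer_def gl_corner_def)
  ultimately show ?thesis by blast
qed

lemma regular_nilpotent_gn_corner_and_centralizer_of_borel:
  fixes u :: "('n::{finite,linorder}) cmat"
  assumes "u \<in> borel_upper \<union> borel_lower" and "regular_nilpotent_g u"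
  shows "regular_nilpotent_gn (corner u) \<and> centralizer gl_corner u = {0}"
proof (cases "u \<in> borel_upper")
  case True
  then show ?thesis
    using assms(2) regular_nilpotent_gn_corner_of_upper centralizer_gl_corner_eq_0_of_upper by blast
next
  case False
  then have "transpose u \<in> borel_upper"
    using assms(1) by (auto simp: borel_lower_def borel_upper_def transpose_def)
  moreover have "regular_nilpotent_g (transpose u)"
    using assms(2) by (simp add: regular_nilpotent_g_transpose)
  ultimately have "regular_nilpotent_gn (corner (transpose u))"
    and "centralizer gl_corner (transpose u) = {0}"
    using regular_nilpotent_gn_corner_of_upper centralizer_gl_corner_eq_0_of_upper by blast+
  moreover have "centralizer gl_corner u = transpose ` centralizer gl_corner (transpose u)"
    using centralizer_transpose[of gl_corner "transpose u"]
    by (simp add: transpose_in_gl_corner_iff)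
  ultimately show ?thesis
    by (simp add: corner_transpose regular_nilpotent_gn_transpose)
qed

lemma matrix_inv_mult:
  assumes "invertible A"
  shows "A ** matrix_inv A = mat 1" and "matrix_inv A ** A = mat 1"
  using someI_ex[OF assms[unfolded invertible_def]] unfolding matrix_inv_def by blast+

theorem proposition3p11:
  fixes x :: "complex^('n::{finite,linorder})^('n::{finite,linorder})"
  assumes "CARD('n) \<ge> 2"
    and "regular_nilpotent_g x"
    and "\<exists>b \<in> Q_plus \<union> Q_minus. x \<in> b"
  shows "regular_nilpotent_gn (corner x)
    \<and> centralizer gl_corner (corner x) \<inter> centralizer gl_full x = {0}"
proof -
  obtain k u where k: "invertible k" "block_diag k" and u: "u \<in> borel_upper \<union> borel_lower"
    and x: "x = k ** u ** matrix_inv k"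
    using assms(3) unfolding Q_plus_def Q_minus_def K_grp_iff by blast
  note inv = matrix_inv_mult[OF k(1)]
  have block: "block_diag (matrix_inv k)" by (rule block_diag_inverse[OF k(2) inv])
  have "regular_nilpotent_g u"
    using assms(2) regular_nilpotent_g_conj_iff[OF inv] x by simp
  then have "regular_nilpotent_gn (corner u)" and "centralizer gl_corner u = {0}"
    using regular_nilpotent_gn_corner_and_centralizer_of_borel[OF u] by blast+
  then have "regular_nilpotent_gn (corner x)" and "centralizer gl_corner x = {0}"
    unfolding x using regular_nilpotent_gn_corner_conj[OF inv k(2) block]
      centralizer_gl_corner_conj_eq_0[OF inv k(2) block] by blast+
  moreover have "centralizer gl_corner (corner x) \<inter> centralizer gl_full x \<subseteq> centralizer gl_corner x"
    unfolding centralizer_def by blast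
  moreover have "0 \<in> centralizer gl_corner (corner x) \<inter> centralizer gl_full x"
    by (simp add: centralizer_def gl_corner_def gl_full_def)
  ultimately show ?thesis by blast
qed

end
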